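(* Let $n\ge 2$, $\theta\in[0,1]$, and $C(\mathbf u)=\theta\prod_{i=1}^n u_i+(1-\theta)\min\{u_1,\dots,u_n\}$ for $\mathbf u\in[0,1]^n$. Then $C$ is $I(\mathbf 1)$ and $I(-\mathbf 1)$, where $\mathbf 1=(1,\dots,1)$.
   Context: For $\alpha\in\{-1,1\}^n$ and a random vector $\mathbf X$, write $\alpha\mathbf X=(\alpha_1X_1,\dots,\alpha_nX_n)$; inequalities between vectors are componentwise. $\mathbf X$ is $I(\alpha)$ if for every $\mathbf x\in\mathbb R^n$, $\mathbb P[\alpha\mathbf X>\mathbf x\mid \alpha\mathbf X>\mathbf x']\le \mathbb P[\alpha\mathbf X>\mathbf x\mid \alpha\mathbf X>\mathbf x'']$ whenever $\mathbf x'\le\mathbf x''$ and $\mathbb P[\alpha\mathbf X>\mathbf x'']>0$. A copula is $I(\alpha)$ if a random vector with that distribution function is. *)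

theory Defs
  imports "HOL-Probability.Probability"
begin

text \<open>Random vectors in R^n are represented by their distribution: a probability
measure M on the Borel sets of real^'n (n = CARD('n)).\<close>

definition upper_orthant :: "real^'n \<Rightarrow> real^'n \<Rightarrow> (real^'n) set" where
  "upper_orthant \<alpha> x = {y. \<forall>i. \<alpha> $ i * y $ i > x $ i}"

definition cond_prob :: "'a measure \<Rightarrow> 'a set \<Rightarrow> 'a set \<Rightarrow> real" where
  "cond_prob M A B = measure M (A \<inter> B) / measure M B"

definition is_I :: "real^'n \<Rightarrow> (real^'n) measure \<Rightarrow> bool" where
  "is_I \<alpha> M \<longleftrightarrow>
     (\<forall>x x' x''. (\<forall>i. x' $ i \<le> x'' $ i) \<longrightarrow> measure M (upper_orthant \<alpha> x'') > 0 \<longrightarrow>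
        cond_prob M (upper_orthant \<alpha> x) (upper_orthant \<alpha> x')
          \<le> cond_prob M (upper_orthant \<alpha> x) (upper_orthant \<alpha> x''))"

text \<open>M is the distribution of a random vector whose distribution function is the
copula C (extended from [0,1]^n to R^n by clamping each coordinate to [0,1]).\<close>
definition has_copula_df :: "(real^'n \<Rightarrow> real) \<Rightarrow> (real^'n) measure \<Rightarrow> bool" where
  "has_copula_df C M \<longleftrightarrow> prob_space M \<and> sets M = sets borel \<and>
     (\<forall>x. measure M {y. \<forall>i. y $ i \<le> x $ i} = C (\<chi> i. max 0 (min 1 (x $ i))))"

text \<open>A copula C is I(alpha): a random vector with distribution function C exists and
(every) such random vector is I(alpha).\<close>
definition copula_is_I :: "real^'n \<Rightarrow> (real^'n \<Rightarrow> real) \<Rightarrow> bool" where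
  "copula_is_I \<alpha> C \<longleftrightarrow> (\<exists>M. has_copula_df C M) \<and> (\<forall>M. has_copula_df C M \<longrightarrow> is_I \<alpha> M)"

end

theory Submission
  imports Defs
begin

text \<open>Let \<open>C = \<theta> \<Pi> + (1 - \<theta>) M\<close>. It is the distribution function of the \<open>\<theta>\<close>-mixture of
  the uniform distributions on the unit cube and on its diagonal, and this is the only law with
  distribution function \<open>C\<close>. For \<open>\<alpha> = 1\<close> and \<open>\<alpha> = -1\<close> every orthant probability
  \<open>P[\<alpha> X > x]\<close> is \<open>C (W x)\<close>, where \<open>W\<close> maps into \<open>[0, 1]\<^sup>n\<close>, is antitone and turns \<open>sup\<close>
  into \<open>inf\<close>; so \<open>I(\<alpha>)\<close> reduces to the antitonicity of \<open>w \<mapsto> C (z \<sqinter> w) / C w\<close>.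
  Changing one coordinate at a time, this becomes the one-variable fact that
  \<open>x \<mapsto> (\<theta> B x + (1 - \<theta>) min x m) / (\<theta> A x + (1 - \<theta>) min x m')\<close> is antitone, where
  \<open>A, m'\<close> are the product and minimum of the other coordinates of \<open>w\<close> and \<open>B, m\<close> those of
  \<open>z \<sqinter> w\<close>; it holds because \<open>B m' \<le> A m\<close>.\<close>

lemma min_mult_min_le:
  fixes s u m m' :: real
  assumes "0 \<le> s" "s \<le> u" "0 \<le> m" "m \<le> m'"
  shows "min u m * min s m' \<le> min s m * min u m'"
  using assms by (cases "u \<le> m"; cases "s \<le> m")
    (auto simp: min_def mult.commute[of m] intro: mult_mono mult_left_mono)

lemma mult_min_le_mult_min:
  fixes s u m :: real
  assumes "0 \<le> s" "s \<le> u" "0 \<le> m"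
  shows "s * min u m \<le> u * min s m"
  using assms mult_left_mono[of m u s] mult_right_mono[of s u m]
  by (auto simp: min_def mult.commute[of u])

lemma mult_min_cross_le:
  fixes s u m m' A B :: real
  assumes "0 \<le> s" "s \<le> u" "0 \<le> m" "m \<le> m'" "0 \<le> B" "B \<le> A" "B * m' \<le> A * m"
  shows "B * u * min s m' + A * s * min u m \<le> B * s * min u m' + A * u * min s m"
proof -
  consider "u \<le> m'" | "s \<le> m'" "m' < u" | "m' < s" by linarith
  then show ?thesis
  proof cases
    case 1
    then have "u * min s m' = s * min u m'" using assms by (simp add: min_def)
    moreover have "A * (s * min u m) \<le> A * (u * min s m)"
      using mult_min_le_mult_min[of s u m] assms by (intro mult_left_mono) auto
    ultimately show ?thesis by (simp add: mult.assoc)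
  next
    case 2
    then have mins: "min s m' = s" "min u m' = m'" "min u m = m" using assms by auto
    show ?thesis
    proof (cases "s \<le> m")
      case True
      have "B * s * (u - m') \<le> A * s * (u - m)"
        using assms 2 by (intro mult_mono) (auto intro: mult_right_mono)
      then show ?thesis using mins True by (simp add: algebra_simps)
    next
      case False
      have "s * u \<le> m' * u" using 2 assms by (intro mult_right_mono) auto
      then have "B * (s * (u - m')) \<le> B * (m' * (u - s))"
        using assms by (intro mult_left_mono) (auto simp: algebra_simps)
      also have "\<dots> \<le> A * m * (u - s)"
        using assms by (simp only: mult.assoc[symmetric]) (intro mult_right_mono, auto)
      finally show ?thesis using mins False by (simp add: algebra_simps)
    qed
  next
    case 3
    then have "min s m' = m'" "min u m' = m'" "min u m = m" "min s m = m" using assms by auto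
    moreover have "B * m' * (u - s) \<le> A * m * (u - s)" using assms by (intro mult_right_mono) auto
    ultimately show ?thesis by (simp add: algebra_simps)
  qed
qed

text \<open>In the difference of the two sides the \<open>p\<^sup>2\<close> terms cancel; the \<open>p q\<close> and \<open>q\<^sup>2\<close>
  terms are the two inequalities above.\<close>

lemma affine_min_ratio_antimono:
  fixes p q s u m m' A B :: real
  assumes "0 \<le> s" "s \<le> u" "0 \<le> m" "m \<le> m'" "0 \<le> B" "B \<le> A" "B * m' \<le> A * m"
    and "0 \<le> p" "0 \<le> q"
  shows "(p * B * u + q * min u m) * (p * A * s + q * min s m')
       \<le> (p * B * s + q * min s m) * (p * A * u + q * min u m')"
proof -
  have "p * q * (B * u * min s m' + A * s * min u m) \<le> p * q * (B * s * min u m' + A * u * min s m)"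
    using mult_min_cross_le[OF assms(1-7)] assms(8,9) by (intro mult_left_mono) auto
  moreover have "q * q * (min u m * min s m') \<le> q * q * (min s m * min u m')"
    using min_mult_min_le[OF assms(1-4)] by (intro mult_left_mono) auto
  ultimately show ?thesis by (simp add: algebra_simps)
qed

lemma affine_min_ratio_capped:
  fixes p q r s t m m' A B :: real
  assumes "0 \<le> s" "s \<le> t" "0 \<le> r" "0 \<le> m" "m \<le> m'" "0 \<le> B" "B \<le> A" "B * m' \<le> A * m"
    and "0 \<le> p" "0 \<le> q"
  shows "(p * B * min r t + q * min (min r t) m) * (p * A * s + q * min s m')
       \<le> (p * B * min r s + q * min (min r s) m) * (p * A * t + q * min t m')"
proof -
  have f_mono: "p * A * x + q * min x m' \<le> p * A * y + q * min y m'" if "x \<le> y" for x y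
    using that assms by (intro add_mono mult_left_mono) auto
  show ?thesis
  proof (cases "r \<le> s")
    case True
    then have "min r t = r" "min r s = r" using assms by auto
    moreover have "0 \<le> p * B * r + q * min r m" using assms by auto
    ultimately show ?thesis using f_mono[OF assms(2)] by (simp add: mult_left_mono)
  next
    case False
    define u where "u = min r t"
    have u: "s \<le> u" "u \<le> t" using False assms by (auto simp: u_def)
    have "(p * B * u + q * min u m) * (p * A * s + q * min s m')
        \<le> (p * B * s + q * min s m) * (p * A * u + q * min u m')"
      using assms u by (intro affine_min_ratio_antimono) auto
    also have "\<dots> \<le> (p * B * s + q * min s m) * (p * A * t + q * min t m')"
      using assms f_mono[OF u(2)] by (intro mult_left_mono) auto
    finally show ?thesis using False by (simp add: u_def)
  qed
qed

lemma inf_vec_nth [simp]: "inf x y $ i = min (x $ i) (y $ i)" for x y :: "real^'n"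
  by (simp add: inf_vec_def inf_real_def)

lemma sup_vec_nth [simp]: "sup x y $ i = max (x $ i) (y $ i)" for x y :: "real^'n"
  by (simp add: sup_vec_def sup_real_def)

definition pi_M_copula :: "real \<Rightarrow> real^'n \<Rightarrow> real" where
  "pi_M_copula \<theta> u = \<theta> * (\<Prod>i\<in>UNIV. u $ i) + (1 - \<theta>) * Min (range (\<lambda>i. u $ i))"

lemma pi_M_copula_nonneg:
  assumes "0 \<le> \<theta>" "\<theta> \<le> 1" "0 \<le> a"
  shows "0 \<le> pi_M_copula \<theta> a"
  unfolding pi_M_copula_def using assms
  by (intro add_nonneg_nonneg mult_nonneg_nonneg prod_nonneg) (auto simp: less_eq_vec_def)

lemma pi_M_copula_mono:
  assumes "0 \<le> \<theta>" "\<theta> \<le> 1" "0 \<le> a" "a \<le> b"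
  shows "pi_M_copula \<theta> a \<le> pi_M_copula \<theta> b"
proof -
  have "(\<Prod>i\<in>UNIV. a $ i) \<le> (\<Prod>i\<in>UNIV. b $ i)"
    using assms by (intro prod_mono) (auto simp: less_eq_vec_def)
  moreover have "Min (range (\<lambda>i. a $ i)) \<le> Min (range (\<lambda>i. b $ i))"
    using assms by (auto simp: less_eq_vec_def Min_le_iff)
  ultimately show ?thesis
    using assms unfolding pi_M_copula_def by (intro add_mono mult_left_mono) auto
qed

lemma prod_mult_Min_le:
  fixes c d :: "'a \<Rightarrow> real"
  assumes "finite R" "R \<noteq> {}" "\<And>i. i \<in> R \<Longrightarrow> 0 \<le> d i" "\<And>i. i \<in> R \<Longrightarrow> d i \<le> c i"
  shows "prod d R * Min (c ` R) \<le> prod c R * Min (d ` R)"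
proof -
  have "Min (d ` R) \<in> d ` R" using assms by (intro Min_in) auto
  then obtain j where j: "j \<in> R" "Min (d ` R) = d j" by auto
  have "prod d R * Min (c ` R) = d j * (prod d (R - {j}) * Min (c ` R))"
    by (simp add: prod.remove[OF assms(1) j(1)] ac_simps)
  also have "\<dots> \<le> d j * (prod c (R - {j}) * c j)"
    using assms j by (intro mult_left_mono mult_mono prod_mono prod_nonneg)
      (auto intro: order_trans)
  also have "\<dots> = prod c R * Min (d ` R)"
    by (simp add: prod.remove[OF assms(1) j(1)] j ac_simps)
  finally show ?thesis .
qed

lemma UNIV_Diff_singleton_nonempty:
  assumes "CARD('n) \<ge> 2"
  shows "UNIV - {k :: 'n} \<noteq> {}"
proof
  assume "UNIV - {k} = {}"
  then have "(UNIV :: 'n set) = {k}" by auto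
  then have "CARD('n) = card {k}" by (rule arg_cong)
  with assms show False by simp
qed

lemma pi_M_copula_remove:
  fixes w :: "real^'n"
  assumes "CARD('n) \<ge> 2"
  shows "pi_M_copula \<theta> w = \<theta> * (w $ k * (\<Prod>i\<in>UNIV - {k}. w $ i))
    + (1 - \<theta>) * min (w $ k) (Min ((\<lambda>i. w $ i) ` (UNIV - {k})))"
proof -
  have "UNIV - {k} \<noteq> {}" using assms by (rule UNIV_Diff_singleton_nonempty)
  moreover have "range (\<lambda>i. w $ i) = insert (w $ k) ((\<lambda>i. w $ i) ` (UNIV - {k}))" by auto
  ultimately show ?thesis
    unfolding pi_M_copula_def by (simp add: prod.remove[of UNIV k] Min_insert)
qed

lemma pi_M_copula_ratio_update:
  fixes a b z :: "real^'n"
  assumes card: "CARD('n) \<ge> 2" and "0 \<le> \<theta>" "\<theta> \<le> 1"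
    and "0 \<le> a" "0 \<le> z" "a \<le> b" and same: "\<And>i. i \<noteq> k \<Longrightarrow> a $ i = b $ i"
  shows "pi_M_copula \<theta> (inf z b) * pi_M_copula \<theta> a \<le> pi_M_copula \<theta> (inf z a) * pi_M_copula \<theta> b"
proof -
  define R where "R = UNIV - {k}"
  have R: "finite R" "R \<noteq> {}" using UNIV_Diff_singleton_nonempty[OF card] by (auto simp: R_def)
  define A where "A = (\<Prod>i\<in>R. a $ i)"
  define B where "B = (\<Prod>i\<in>R. min (z $ i) (a $ i))"
  define m' where "m' = Min ((\<lambda>i. a $ i) ` R)"
  define m where "m = Min ((\<lambda>i. min (z $ i) (a $ i)) ` R)"
  have nonneg: "0 \<le> a $ i" "0 \<le> z $ i" "a $ k \<le> b $ k" for i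
    using assms by (auto simp: less_eq_vec_def)
  have rest_b: "(\<Prod>i\<in>R. b $ i) = A" "Min ((\<lambda>i. b $ i) ` R) = m'"
    "(\<Prod>i\<in>R. inf z b $ i) = B" "Min ((\<lambda>i. inf z b $ i) ` R) = m"
    using same unfolding A_def B_def m_def m'_def R_def
    by (auto intro!: prod.cong arg_cong[where f = Min] image_cong)
  have rest_a: "(\<Prod>i\<in>R. inf z a $ i) = B" "Min ((\<lambda>i. inf z a $ i) ` R) = m"
    unfolding B_def m_def by simp_all
  have B: "0 \<le> B" "B \<le> A"
    using nonneg unfolding A_def B_def by (auto intro!: prod_nonneg prod_mono)
  have m: "0 \<le> m" "m \<le> m'"
    using R nonneg unfolding m_def m'_def
    by (auto simp: Min_ge_iff intro: Min.coboundedI[THEN order_trans])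
  have "B * m' \<le> A * m"
    unfolding A_def B_def m_def m'_def using nonneg
    by (intro prod_mult_Min_le R) auto
  then have "(\<theta> * B * min (z $ k) (b $ k) + (1 - \<theta>) * min (min (z $ k) (b $ k)) m)
        * (\<theta> * A * a $ k + (1 - \<theta>) * min (a $ k) m')
      \<le> (\<theta> * B * min (z $ k) (a $ k) + (1 - \<theta>) * min (min (z $ k) (a $ k)) m)
        * (\<theta> * A * b $ k + (1 - \<theta>) * min (b $ k) m')"
    using assms nonneg B m by (intro affine_min_ratio_capped) auto
  then show ?thesis
    unfolding pi_M_copula_remove[OF card, of _ _ k] R_def[symmetric] rest_a rest_b
      A_def[symmetric] m'_def[symmetric]
    by (simp add: ac_simps)
qed

text \<open>Raise the coordinates of \<open>a\<close> to those of \<open>b\<close> one at a time; the positivity of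
  \<open>pi_M_copula \<theta> a\<close> lets the single-coordinate steps be chained.\<close>

lemma pi_M_copula_ratio_antimono:
  fixes a b z :: "real^'n"
  assumes card: "CARD('n) \<ge> 2" and \<theta>: "0 \<le> \<theta>" "\<theta> \<le> 1"
    and a: "0 \<le> a" and "0 \<le> z" "a \<le> b" and pos: "0 < pi_M_copula \<theta> a"
  shows "pi_M_copula \<theta> (inf z b) * pi_M_copula \<theta> a \<le> pi_M_copula \<theta> (inf z a) * pi_M_copula \<theta> b"
proof -
  let ?F = "pi_M_copula \<theta>"
  define c where "c S = (\<chi> i. if i \<in> S then b $ i else a $ i)" for S
  have c: "0 \<le> c S" "a \<le> c S" "c S \<le> c (insert k S)" for S k
    using assms by (auto simp: c_def less_eq_vec_def intro: order_trans)
  have "?F (inf z (c S)) * ?F a \<le> ?F (inf z a) * ?F (c S)" if "finite S" for S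
    using that
  proof (induction S rule: finite_induct)
    case empty
    have "c {} = a" by (simp add: c_def vec_eq_iff)
    then show ?case by simp
  next
    case (insert k S)
    let ?c = "c S" and ?d = "c (insert k S)"
    have "0 < ?F ?c" using pos pi_M_copula_mono[OF \<theta> a c(2)] by (rule less_le_trans)
    have step: "?F (inf z ?d) * ?F ?c \<le> ?F (inf z ?c) * ?F ?d"
      using assms c insert.hyps by (intro pi_M_copula_ratio_update[where k = k]) (auto simp: c_def)
    have "?F (inf z ?d) * ?F a * ?F ?c = (?F (inf z ?d) * ?F ?c) * ?F a" by (simp add: ac_simps)
    also have "\<dots> \<le> (?F (inf z ?c) * ?F ?d) * ?F a"
      using step pos by (intro mult_right_mono) auto
    also have "\<dots> = (?F (inf z ?c) * ?F a) * ?F ?d" by (simp add: ac_simps)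
    also have "\<dots> \<le> (?F (inf z a) * ?F ?c) * ?F ?d"
      using insert.IH pi_M_copula_nonneg[OF \<theta> c(1)] by (intro mult_right_mono)
    also have "\<dots> = (?F (inf z a) * ?F ?d) * ?F ?c" by (simp add: ac_simps)
    finally show ?case using \<open>0 < ?F ?c\<close> by (rule mult_right_le_imp_le)
  qed
  moreover have "c UNIV = b" by (simp add: c_def vec_eq_iff)
  ultimately show ?thesis by (metis finite_class.finite_UNIV)
qed

lemma upper_orthant_Int: "upper_orthant \<alpha> x \<inter> upper_orthant \<alpha> y = upper_orthant \<alpha> (sup x y)"
  by (auto simp: upper_orthant_def)

lemma is_I_if_orthant_measures:
  fixes M :: "(real^'n) measure" and W :: "real^'n \<Rightarrow> real^'n"
  assumes card: "CARD('n) \<ge> 2" and \<theta>: "0 \<le> \<theta>" "\<theta> \<le> 1"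
    and meas: "\<And>x. measure M (upper_orthant \<alpha> x) = pi_M_copula \<theta> (W x)"
    and W_sup: "\<And>x y. W (sup x y) = inf (W x) (W y)"
    and W_antimono: "\<And>x y. x \<le> y \<Longrightarrow> W y \<le> W x"
    and W_nonneg: "\<And>x. 0 \<le> W x"
  shows "is_I \<alpha> M"
  unfolding is_I_def cond_prob_def upper_orthant_Int meas W_sup
proof (intro allI impI)
  fix x x' x'' :: "real^'n"
  let ?F = "pi_M_copula \<theta>"
  assume "\<forall>i. x' $ i \<le> x'' $ i" and pos: "0 < ?F (W x'')"
  then have "W x'' \<le> W x'" by (intro W_antimono) (simp add: less_eq_vec_def)
  then have "?F (W x'') \<le> ?F (W x')" and
    "?F (inf (W x) (W x')) * ?F (W x'') \<le> ?F (inf (W x) (W x'')) * ?F (W x')"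
    using pos W_nonneg
    by (auto intro: pi_M_copula_mono[OF \<theta>] pi_M_copula_ratio_antimono[OF card \<theta>])
  then show "?F (inf (W x) (W x')) / ?F (W x') \<le> ?F (inf (W x) (W x'')) / ?F (W x'')"
    using pos by (simp add: divide_le_eq le_divide_eq field_simps)
qed

lemma measure_eqI_atMost:
  fixes M N :: "'a::ordered_euclidean_space measure"
  assumes sets: "sets M = sets borel" "sets N = sets borel" and "finite_measure M"
    and eq: "\<And>x. emeasure M {..x} = emeasure N {..x}"
  shows "M = N"
proof (rule measure_eqI_generator_eq[where E = "range atMost" and \<Omega> = UNIV
    and A = "\<lambda>n. {.. real n *\<^sub>R One}"])
  show "Int_stable (range atMost :: 'a set set)"
  proof (rule Int_stableI)
    fix A B :: "'a set" assume "A \<in> range atMost" "B \<in> range atMost"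
    then obtain a b where "A = {..a}" "B = {..b}" by auto
    then have "A \<inter> B = {..inf a b}" by auto
    then show "A \<inter> B \<in> range atMost" by blast
  qed
  have "sets (borel :: 'a measure) = sigma_sets UNIV (range atMost)"
    by (subst borel_eq_atMost) simp
  then show "sets M = sigma_sets UNIV (range atMost)" "sets N = sigma_sets UNIV (range atMost)"
    using sets by simp_all
  show "(\<Union>n. {.. real n *\<^sub>R One}) = (UNIV :: 'a set)"
  proof (intro set_eqI iffI UNIV_I)
    fix x :: 'a
    obtain n where "norm x \<le> real n" using real_arch_simple by blast
    then have "x \<le> real n *\<^sub>R One"
      by (auto simp: eucl_le[where 'a='a] dest!: Basis_le_norm[of _ x])
    then show "x \<in> (\<Union>n. {.. real n *\<^sub>R One})" by auto
  qed
  show "emeasure M {.. real n *\<^sub>R One} \<noteq> \<infinity>" for n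
    using \<open>finite_measure M\<close> by (simp add: finite_measure.emeasure_finite)
qed (use eq in auto)

lemma has_copula_df_unique:
  assumes "has_copula_df C M" "has_copula_df C N"
  shows "M = N"
proof (rule measure_eqI_atMost)
  interpret M: prob_space M using assms(1) by (simp add: has_copula_df_def)
  interpret N: prob_space N using assms(2) by (simp add: has_copula_df_def)
  show "finite_measure M" by simp
  have atMost: "{..x} = {y. \<forall>i. y $ i \<le> x $ i}" for x :: "real^'n"
    by (auto simp: less_eq_vec_def)
  show "emeasure M {..x} = emeasure N {..x}" for x
    using assms unfolding atMost
    by (simp add: has_copula_df_def M.emeasure_eq_measure N.emeasure_eq_measure)
qed (use assms in \<open>simp_all add: has_copula_df_def\<close>)

lemma copula_is_I_if_has_copula_df:
  assumes "has_copula_df C M" "is_I \<alpha> M"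
  shows "copula_is_I \<alpha> C"
  using assms has_copula_df_unique unfolding copula_is_I_def by blast

definition mixture :: "real \<Rightarrow> 'a measure \<Rightarrow> 'a measure \<Rightarrow> 'a measure" where
  "mixture p M N =
    measure_of (space M) (sets M) (\<lambda>A. ennreal p * emeasure M A + ennreal (1 - p) * emeasure N A)"

lemma sets_mixture [simp]: "sets (mixture p M N) = sets M"
  by (simp add: mixture_def)

lemma space_mixture [simp]: "space (mixture p M N) = space M"
  by (simp add: mixture_def)

lemma emeasure_mixture:
  assumes N: "sets N = sets M" and A: "A \<in> sets M"
  shows "emeasure (mixture p M N) A = ennreal p * emeasure M A + ennreal (1 - p) * emeasure N A"
    (is "_ = ?\<mu> A")
  unfolding mixture_def
proof (rule emeasure_measure_of_sigma)
  show "sigma_algebra (space M) (sets M)" ..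
  show "positive (sets M) ?\<mu>" by (simp add: positive_def)
  show "countably_additive (sets M) ?\<mu>"
  proof (rule countably_additiveI)
    fix A :: "nat \<Rightarrow> _" assume A: "range A \<subseteq> sets M" "disjoint_family A"
    have "(\<Sum>i. ?\<mu> (A i))
        = ennreal p * (\<Sum>i. emeasure M (A i)) + ennreal (1 - p) * (\<Sum>i. emeasure N (A i))"
      by (subst suminf_add[symmetric]) auto
    also have "\<dots> = ?\<mu> (\<Union>i. A i)" using A N by (simp add: suminf_emeasure)
    finally show "(\<Sum>i. ?\<mu> (A i)) = ?\<mu> (\<Union>i. A i)" .
  qed
qed (fact A)

lemma
  assumes "prob_space M" "prob_space N" "sets N = sets M" "0 \<le> p" "p \<le> 1"
  shows prob_space_mixture: "prob_space (mixture p M N)"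
    and measure_mixture:
      "A \<in> sets M \<Longrightarrow> measure (mixture p M N) A = p * measure M A + (1 - p) * measure N A"
proof -
  interpret M: prob_space M by fact
  interpret N: prob_space N by fact
  have emeasure: "emeasure (mixture p M N) A = ennreal (p * measure M A + (1 - p) * measure N A)"
    if "A \<in> sets M" for A
  proof -
    have "emeasure (mixture p M N) A
        = ennreal p * ennreal (measure M A) + ennreal (1 - p) * ennreal (measure N A)"
      using emeasure_mixture[OF assms(3) that] assms(3) that
      by (simp add: M.emeasure_eq_measure N.emeasure_eq_measure)
    also have "\<dots> = ennreal (p * measure M A + (1 - p) * measure N A)"
      using assms by (simp add: ennreal_mult ennreal_plus)
    finally show ?thesis .
  qed
  show "prob_space (mixture p M N)"
    using N.prob_space sets_eq_imp_space_eq[OF assms(3)]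
    by (intro prob_spaceI) (simp add: emeasure M.prob_space)
  show "A \<in> sets M \<Longrightarrow> measure (mixture p M N) A = p * measure M A + (1 - p) * measure N A"
    using emeasure assms by (intro measure_eq_emeasure_eq_ennreal) auto
qed

lemma measure_lborel_between_box_cbox:
  fixes l u :: "'a::euclidean_space"
  assumes "box l u \<subseteq> T" "T \<subseteq> cbox l u" "T \<in> sets lborel"
  shows "measure lborel T = measure lborel (cbox l u)"
proof (rule antisym)
  show "measure lborel T \<le> measure lborel (cbox l u)"
    using assms by (intro measure_mono_fmeasurable) auto
  have "measure lborel (box l u) \<le> measure lborel T"
    using assms by (intro measure_mono_fmeasurable) (auto intro: fmeasurableI2[OF fmeasurable_cbox])
  then show "measure lborel (cbox l u) \<le> measure lborel T"
    by (simp add: measure_lborel_box_eq measure_lborel_cbox_eq)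
qed

definition clamp01 :: "real \<Rightarrow> real" where
  "clamp01 t = max 0 (min 1 t)"

lemma clamp01_bounds [simp]: "0 \<le> clamp01 y" "clamp01 y \<le> 1"
  by (simp_all add: clamp01_def)

lemma clamp01_mono: "x \<le> y \<Longrightarrow> clamp01 x \<le> clamp01 y"
  by (auto simp: clamp01_def)

lemma
  shows less_clamp01_iff: "0 < t \<Longrightarrow> t < clamp01 y \<longleftrightarrow> t < y \<and> t < 1"
    and clamp01_less_iff: "t < 1 \<Longrightarrow> clamp01 y < t \<longleftrightarrow> y < t \<and> 0 < t"
    and le_clamp01_iff: "0 \<le> t \<Longrightarrow> t \<le> 1 \<Longrightarrow> t \<le> clamp01 y \<longleftrightarrow> t \<le> y \<or> t = 0"
    and clamp01_le_iff: "0 \<le> t \<Longrightarrow> t \<le> 1 \<Longrightarrow> clamp01 y \<le> t \<longleftrightarrow> y \<le> t \<or> t = 1"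
  by (auto simp: clamp01_def)

lemma orthant_sets_borel:
  fixes x :: "real^'n"
  shows "{y. \<forall>i. y $ i \<le> x $ i} \<in> sets borel" "{y. \<forall>i. y $ i < x $ i} \<in> sets borel"
    and "{y. \<forall>i. x $ i < y $ i} \<in> sets borel"
  by (auto intro!: borel_closed borel_open closed_Collect_le open_Collect_less continuous_intros
      simp: Collect_all_eq)

definition cube_uniform :: "(real^'n) measure" where
  "cube_uniform = uniform_measure lborel (cbox 0 1)"

lemma
  shows measure_lborel_unit_cube: "measure lborel (cbox 0 (1 :: real^'n)) = 1"
    and emeasure_lborel_unit_cube: "emeasure lborel (cbox 0 (1 :: real^'n)) = 1"
proof -
  have "cbox 0 (1 :: real^'n) \<noteq> {}" by (simp add: interval_ne_empty_cart)
  then show "measure lborel (cbox 0 (1 :: real^'n)) = 1" by (simp add: content_cbox_cart)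
  moreover have "emeasure lborel (cbox 0 (1 :: real^'n)) = measure lborel (cbox 0 (1 :: real^'n))"
    by (rule emeasure_eq_measure2[OF fmeasurable_cbox])
  ultimately show "emeasure lborel (cbox 0 (1 :: real^'n)) = 1" by simp
qed

lemma
  shows prob_space_cube_uniform: "prob_space cube_uniform"
    and sets_cube_uniform [simp]: "sets cube_uniform = sets borel"
  unfolding cube_uniform_def
  by (auto intro!: prob_space_uniform_measure simp: emeasure_lborel_unit_cube)

lemma measure_cube_uniform_coordinatewise:
  fixes l u :: "real^'n"
  assumes "l \<le> u" "{y. \<forall>i. Q i (y $ i)} \<in> sets borel"
    and inner: "\<And>i t. l $ i < t \<Longrightarrow> t < u $ i \<Longrightarrow> 0 \<le> t \<and> t \<le> 1 \<and> Q i t"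
    and outer: "\<And>i t. 0 \<le> t \<Longrightarrow> t \<le> 1 \<Longrightarrow> Q i t \<Longrightarrow> l $ i \<le> t \<and> t \<le> u $ i"
  shows "measure cube_uniform {y. \<forall>i. Q i (y $ i)} = (\<Prod>i\<in>UNIV. u $ i - l $ i)"
proof -
  let ?S = "{y. \<forall>i. Q i (y $ i)}"
  have "measure cube_uniform ?S = measure lborel (cbox 0 1 \<inter> ?S)"
    using assms unfolding cube_uniform_def
    by (simp add: emeasure_lborel_unit_cube measure_lborel_unit_cube)
  also have "\<dots> = measure lborel (cbox l u)"
  proof (rule measure_lborel_between_box_cbox)
    show "box l u \<subseteq> cbox 0 1 \<inter> ?S"
    proof
      fix y assume "y \<in> box l u"
      then have "0 \<le> y $ i \<and> y $ i \<le> 1 \<and> Q i (y $ i)" for i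
        using inner[of i "y $ i"] by (simp add: mem_box_cart)
      then show "y \<in> cbox 0 1 \<inter> ?S" by (simp add: mem_box_cart)
    qed
    show "cbox 0 1 \<inter> ?S \<subseteq> cbox l u" using outer by (auto simp: mem_box_cart)
  qed (use assms in auto)
  also have "\<dots> = (\<Prod>i\<in>UNIV. u $ i - l $ i)"
    using assms by (subst content_cbox_cart) (auto simp: interval_ne_empty_cart less_eq_vec_def)
  finally show ?thesis .
qed

lemma measure_cube_uniform_orthants:
  fixes x :: "real^'n"
  shows "measure cube_uniform {y. \<forall>i. y $ i \<le> x $ i} = (\<Prod>i\<in>UNIV. clamp01 (x $ i))"
    and "measure cube_uniform {y. \<forall>i. y $ i < x $ i} = (\<Prod>i\<in>UNIV. clamp01 (x $ i))"
    and "measure cube_uniform {y. \<forall>i. x $ i < y $ i} = (\<Prod>i\<in>UNIV. 1 - clamp01 (x $ i))"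
proof -
  let ?c = "\<chi> i. clamp01 (x $ i)"
  have "measure cube_uniform {y. \<forall>i. y $ i \<le> x $ i} = (\<Prod>i\<in>UNIV. ?c $ i - 0 $ i)"
    by (intro measure_cube_uniform_coordinatewise orthant_sets_borel)
      (auto simp: less_eq_vec_def less_clamp01_iff le_clamp01_iff less_imp_le)
  moreover have "measure cube_uniform {y. \<forall>i. y $ i < x $ i} = (\<Prod>i\<in>UNIV. ?c $ i - 0 $ i)"
    by (intro measure_cube_uniform_coordinatewise orthant_sets_borel)
      (auto simp: less_eq_vec_def less_clamp01_iff le_clamp01_iff less_imp_le)
  moreover have "measure cube_uniform {y. \<forall>i. x $ i < y $ i} = (\<Prod>i\<in>UNIV. 1 $ i - ?c $ i)"
    by (intro measure_cube_uniform_coordinatewise orthant_sets_borel)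
      (auto simp: less_eq_vec_def clamp01_less_iff clamp01_le_iff less_imp_le)
  ultimately show "measure cube_uniform {y. \<forall>i. y $ i \<le> x $ i} = (\<Prod>i\<in>UNIV. clamp01 (x $ i))"
    "measure cube_uniform {y. \<forall>i. y $ i < x $ i} = (\<Prod>i\<in>UNIV. clamp01 (x $ i))"
    "measure cube_uniform {y. \<forall>i. x $ i < y $ i} = (\<Prod>i\<in>UNIV. 1 - clamp01 (x $ i))"
    by simp_all
qed

definition diagonal_uniform :: "(real^'n) measure" where
  "diagonal_uniform = distr (uniform_measure lborel {0..1}) borel (\<lambda>t. \<chi> i. t)"

lemma diagonal_measurable:
  "(\<lambda>t. \<chi> i. t) \<in> uniform_measure lborel {0..1} \<rightarrow>\<^sub>M (borel :: (real^'n) measure)"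
  using borel_measurable_continuous_onI[OF continuous_on_vec_lambda[OF continuous_on_id]]
  by (simp add: measurable_def)

lemma
  shows prob_space_diagonal_uniform: "prob_space diagonal_uniform"
    and sets_diagonal_uniform [simp]: "sets diagonal_uniform = sets borel"
  unfolding diagonal_uniform_def
  by (auto intro!: prob_space.prob_space_distr prob_space_uniform_measure diagonal_measurable)

lemma measure_diagonal_uniform_coordinatewise:
  fixes l u :: real
  assumes "l \<le> u" and S: "{y :: real^'n. \<forall>i. Q i (y $ i)} \<in> sets borel"
    and inner: "\<And>t. l < t \<Longrightarrow> t < u \<Longrightarrow> 0 \<le> t \<and> t \<le> 1 \<and> (\<forall>i. Q i t)"
    and outer: "\<And>t. 0 \<le> t \<Longrightarrow> t \<le> 1 \<Longrightarrow> \<forall>i. Q i t \<Longrightarrow> l \<le> t \<and> t \<le> u"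
  shows "measure (diagonal_uniform :: (real^'n) measure) {y. \<forall>i. Q i (y $ i)} = u - l"
proof -
  let ?S = "{y :: real^'n. \<forall>i. Q i (y $ i)}"
  have pre: "(\<lambda>t. \<chi> i. t) -` ?S = {t. \<forall>i. Q i t}" by auto
  have borel: "{t. \<forall>i::'n. Q i t} \<in> sets borel"
    using measurable_sets[OF diagonal_measurable S] by (simp add: pre)
  then have "measure diagonal_uniform ?S = measure lborel ({0..1} \<inter> {t. \<forall>i::'n. Q i t})"
    using S unfolding diagonal_uniform_def
    by (subst measure_distr[OF diagonal_measurable]) (simp_all add: pre)
  also have "\<dots> = measure lborel (cbox l u)"
    using assms borel by (intro measure_lborel_between_box_cbox) auto
  also have "\<dots> = u - l" using \<open>l \<le> u\<close> by simp
  finally show ?thesis .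
qed

lemma measure_diagonal_uniform_orthants:
  fixes x :: "real^'n"
  shows "measure diagonal_uniform {y. \<forall>i. y $ i \<le> x $ i} = Min (range (\<lambda>i. clamp01 (x $ i)))"
    and "measure diagonal_uniform {y. \<forall>i. y $ i < x $ i} = Min (range (\<lambda>i. clamp01 (x $ i)))"
    and "measure diagonal_uniform {y. \<forall>i. x $ i < y $ i} = Min (range (\<lambda>i. 1 - clamp01 (x $ i)))"
proof -
  let ?m = "Min (range (\<lambda>i. clamp01 (x $ i)))" and ?m' = "Min (range (\<lambda>i. 1 - clamp01 (x $ i)))"
  have "measure diagonal_uniform {y. \<forall>i. y $ i \<le> x $ i} = ?m - 0"
    by (intro measure_diagonal_uniform_coordinatewise orthant_sets_borel)
      (auto simp: less_clamp01_iff le_clamp01_iff less_imp_le)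
  moreover have "measure diagonal_uniform {y. \<forall>i. y $ i < x $ i} = ?m - 0"
    by (intro measure_diagonal_uniform_coordinatewise orthant_sets_borel)
      (auto simp: less_clamp01_iff le_clamp01_iff less_imp_le)
  moreover have "1 - ?m' < t \<longleftrightarrow> 1 - t < ?m'" "1 - ?m' \<le> t \<longleftrightarrow> 1 - t \<le> ?m'" for t
    by linarith+
  then have "measure diagonal_uniform {y. \<forall>i. x $ i < y $ i} = 1 - (1 - ?m')"
    by (intro measure_diagonal_uniform_coordinatewise orthant_sets_borel)
      (auto simp: clamp01_less_iff clamp01_le_iff less_imp_le)
  ultimately show "measure diagonal_uniform {y. \<forall>i. y $ i \<le> x $ i} = ?m"
    "measure diagonal_uniform {y. \<forall>i. y $ i < x $ i} = ?m"
    "measure diagonal_uniform {y. \<forall>i. x $ i < y $ i} = ?m'"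
    by simp_all
qed

definition pi_M_measure :: "real \<Rightarrow> (real^'n) measure" where
  "pi_M_measure \<theta> = mixture \<theta> cube_uniform diagonal_uniform"

lemma sets_pi_M_measure [simp]: "sets (pi_M_measure \<theta>) = sets borel"
  by (simp add: pi_M_measure_def)

lemma
  assumes "0 \<le> \<theta>" "\<theta> \<le> 1"
  shows prob_space_pi_M_measure: "prob_space (pi_M_measure \<theta>)"
    and measure_pi_M_measure: "S \<in> sets borel \<Longrightarrow>
      measure (pi_M_measure \<theta>) S = \<theta> * measure cube_uniform S + (1 - \<theta>) * measure diagonal_uniform S"
  unfolding pi_M_measure_def
  by (auto intro!: prob_space_mixture measure_mixture assms prob_space_cube_uniform
      prob_space_diagonal_uniform)

lemma measure_pi_M_measure_orthants:
  fixes x :: "real^'n"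
  assumes "0 \<le> \<theta>" "\<theta> \<le> 1"
  shows "measure (pi_M_measure \<theta>) {y. \<forall>i. y $ i \<le> x $ i} = pi_M_copula \<theta> (\<chi> i. clamp01 (x $ i))"
    and "measure (pi_M_measure \<theta>) {y. \<forall>i. y $ i < x $ i} = pi_M_copula \<theta> (\<chi> i. clamp01 (x $ i))"
    and "measure (pi_M_measure \<theta>) {y. \<forall>i. x $ i < y $ i} = pi_M_copula \<theta> (\<chi> i. 1 - clamp01 (x $ i))"
  using assms
  by (simp_all add: measure_pi_M_measure orthant_sets_borel measure_cube_uniform_orthants
      measure_diagonal_uniform_orthants pi_M_copula_def)

lemma has_copula_df_pi_M_measure:
  assumes "0 \<le> \<theta>" "\<theta> \<le> 1"
  shows "has_copula_df (pi_M_copula \<theta>) (pi_M_measure \<theta>)"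
  unfolding has_copula_df_def clamp01_def[symmetric]
  by (intro conjI allI prob_space_pi_M_measure[OF assms] measure_pi_M_measure_orthants(1)[OF assms]
      sets_pi_M_measure)

lemma is_I_one_pi_M_measure:
  assumes "CARD('n) \<ge> 2" "0 \<le> \<theta>" "\<theta> \<le> 1"
  shows "is_I (\<chi> i. 1) (pi_M_measure \<theta> :: (real^'n) measure)"
proof (rule is_I_if_orthant_measures[OF assms, where W = "\<lambda>x. \<chi> i. 1 - clamp01 (x $ i)"])
  have "upper_orthant (\<chi> i. 1) x = {y. \<forall>i. x $ i < y $ i}" for x :: "real^'n"
    by (simp add: upper_orthant_def)
  then show "measure (pi_M_measure \<theta>) (upper_orthant (\<chi> i. 1) x)
      = pi_M_copula \<theta> (\<chi> i. 1 - clamp01 (x $ i))" for x :: "real^'n"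
    using measure_pi_M_measure_orthants(3)[OF assms(2,3)] by simp
  show "(\<chi> i. 1 - clamp01 (sup x y $ i)) = inf (\<chi> i. 1 - clamp01 (x $ i)) (\<chi> i. 1 - clamp01 (y $ i))"
    for x y :: "real^'n"
    by (auto simp: clamp01_def vec_eq_iff)
qed (auto simp: less_eq_vec_def clamp01_mono)

lemma is_I_minus_one_pi_M_measure:
  assumes "CARD('n) \<ge> 2" "0 \<le> \<theta>" "\<theta> \<le> 1"
  shows "is_I (\<chi> i. -1) (pi_M_measure \<theta> :: (real^'n) measure)"
proof (rule is_I_if_orthant_measures[OF assms, where W = "\<lambda>x. \<chi> i. clamp01 (- x $ i)"])
  have "upper_orthant (\<chi> i. -1) x = {y. \<forall>i. y $ i < (- x) $ i}" for x :: "real^'n"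
    by (auto simp: upper_orthant_def) (metis less_minus_iff)+
  then show "measure (pi_M_measure \<theta>) (upper_orthant (\<chi> i. -1) x)
      = pi_M_copula \<theta> (\<chi> i. clamp01 (- x $ i))" for x :: "real^'n"
    using measure_pi_M_measure_orthants(2)[OF assms(2,3), of "- x"] by simp
  show "(\<chi> i. clamp01 (- sup x y $ i)) = inf (\<chi> i. clamp01 (- x $ i)) (\<chi> i. clamp01 (- y $ i))"
    for x y :: "real^'n"
    by (auto simp: clamp01_def vec_eq_iff)
qed (auto simp: less_eq_vec_def clamp01_mono)

theorem mainTheorem9:
  fixes \<theta> :: real and C :: "real^'n \<Rightarrow> real"
  assumes "CARD('n) \<ge> 2"
    and "0 \<le> \<theta>" and "\<theta> \<le> 1"
    and "\<And>u. C u = \<theta> * (\<Prod>i\<in>UNIV. u $ i) + (1 - \<theta>) * Min (range (\<lambda>i. u $ i))"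
  shows "copula_is_I (\<chi> i. 1) C \<and> copula_is_I (\<chi> i. -1) C"
proof -
  have "C = pi_M_copula \<theta>" using assms(4) by (auto simp: pi_M_copula_def)
  then have "has_copula_df C (pi_M_measure \<theta>)"
    using has_copula_df_pi_M_measure[OF assms(2,3)] by simp
  then show ?thesis
    using copula_is_I_if_has_copula_df is_I_one_pi_M_measure[OF assms(1-3)]
      is_I_minus_one_pi_M_measure[OF assms(1-3)] by blast
qed

end
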